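(* Let $(X_n)_{n\ge0}$ be a Bienaym\'e--Galton--Watson branching process with $X_0=1$ and offspring distribution $\mathrm{Bin}(n_0,1/n_0)$, $n_0\ge2$, and let $Y_n=\sum_{k=0}^nX_k$. Then: (a) there exist $c_0>0$ and $p_0>0$ such that $P(Y_n>c_0n^2)\ge p_0/n$ for all $n\ge1$; (b) with these constants, if $\eta_n$ has distribution $\mathrm{Bin}(n,p_0/n)$, then $Y_n[n]$ stochastically dominates $c_0n^2\eta_n$.
   Context: For a random variable $\xi$ and integer $n\ge1$, $\xi[n]$ denotes a random variable distributed as $\sum_{i=1}^n\xi_i$ where $\xi_1,\dots,\xi_n$ are i.i.d. copies of $\xi$. A random variable $U$ stochastically dominates $W$ if $P(U>s)\ge P(W>s)$ for all $s$. *)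

theory Defs
  imports "HOL-Probability.Probability"
begin

fun iid_sum :: "nat pmf \<Rightarrow> nat \<Rightarrow> nat pmf" where
  "iid_sum p 0 = return_pmf 0"
| "iid_sum p (Suc k) = bind_pmf p (\<lambda>a. map_pmf (\<lambda>b. a + b) (iid_sum p k))"

text \<open>Joint law of (X_n, Y_n) for a Galton--Watson process with offspring law xi,
  X_0 = 1, Y_n = X_0 + ... + X_n.  Given X_n = x, X_{n+1} is a sum of x i.i.d. copies of xi.\<close>
fun gw_XY :: "nat pmf \<Rightarrow> nat \<Rightarrow> (nat \<times> nat) pmf" where
  "gw_XY xi 0 = return_pmf (1, 1)"
| "gw_XY xi (Suc n) =
     bind_pmf (gw_XY xi n) (\<lambda>(x, y). map_pmf (\<lambda>x'. (x', y + x')) (iid_sum xi x))"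

definition gw_total :: "nat pmf \<Rightarrow> nat \<Rightarrow> nat pmf" where
  "gw_total xi n = map_pmf snd (gw_XY xi n)"

end

theory Submission
  imports Defs
begin

(* Fix a horizon N. The quantity M_k = Y_k + (N - k) X_k is a martingale in k with M_N = Y_N,
   and its increments are (N - k) (X_{k+1} - X_k), whose conditional central moments are
   (N - k)^j X_k times those of the offspring law. Summing them gives E Y_N = N + 1,
   E Y_N^2 >= sigma^2 N^3 / 3 and E Y_N^3 = O(N^5). Integrating the pointwise bound
   y^2 <= t y + u^2 [y > t] + y^3 / u with t and u of order N^2 then yields
   P(Y_N > c N^2) >= p / N. For (b), a tail bound P(Y > T) >= r says that Y dominates T times
   a Bernoulli(r) variable; domination is preserved under i.i.d. sums, and Bin(n, r) is the sum
   of n Bernoulli(r) variables. *)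

abbreviation E :: "'a pmf \<Rightarrow> ('a \<Rightarrow> real) \<Rightarrow> real" where
  "E p g \<equiv> measure_pmf.expectation p g"

lemma expectation_shift_powers:
  fixes f :: "'a \<Rightarrow> real"
  assumes "finite (set_pmf q)"
  shows "E q (\<lambda>s. d + f s) = d + E q f"
    and "E q (\<lambda>s. (d + f s) ^ 2) = d ^ 2 + 2 * d * E q f + E q (\<lambda>s. f s ^ 2)"
    and "E q (\<lambda>s. (d + f s) ^ 3)
           = d ^ 3 + 3 * d ^ 2 * E q f + 3 * d * E q (\<lambda>s. f s ^ 2) + E q (\<lambda>s. f s ^ 3)"
proof -
  note integrable = integrable_measure_pmf_finite[OF assms]
  show "E q (\<lambda>s. d + f s) = d + E q f"
    by (simp add: integrable)
  have "(\<lambda>s. (d + f s) ^ 2) = (\<lambda>s. d ^ 2 + 2 * d * f s + f s ^ 2)"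
    by (simp add: power2_eq_square algebra_simps)
  then show "E q (\<lambda>s. (d + f s) ^ 2) = d ^ 2 + 2 * d * E q f + E q (\<lambda>s. f s ^ 2)"
    by (simp add: integrable)
  have "(\<lambda>s. (d + f s) ^ 3) = (\<lambda>s. d ^ 3 + 3 * d ^ 2 * f s + 3 * d * f s ^ 2 + f s ^ 3)"
    by (simp add: power2_eq_square power3_eq_cube algebra_simps)
  then show "E q (\<lambda>s. (d + f s) ^ 3)
           = d ^ 3 + 3 * d ^ 2 * E q f + 3 * d * E q (\<lambda>s. f s ^ 2) + E q (\<lambda>s. f s ^ 3)"
    by (simp add: integrable)
qed

lemma expectation_bind_pmf_finite:
  fixes g :: "'b \<Rightarrow> real"
  assumes fin_p: "finite (set_pmf p)" and fin_f: "\<And>x. x \<in> set_pmf p \<Longrightarrow> finite (set_pmf (f x))"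
  shows "E (bind_pmf p f) g = E p (\<lambda>x. E (f x) g)"
proof -
  define S where "S = set_pmf (bind_pmf p f)"
  have fin_S: "finite S" unfolding S_def using fin_p fin_f by auto
  have sub: "x \<in> set_pmf p \<Longrightarrow> set_pmf (f x) \<subseteq> S" for x unfolding S_def by auto
  have "E (bind_pmf p f) g = (\<Sum>y\<in>S. g y * pmf (bind_pmf p f) y)"
    by (rule integral_measure_pmf_real[OF fin_S]) (auto simp: S_def)
  also have "\<dots> = (\<Sum>y\<in>S. g y * (\<Sum>x\<in>set_pmf p. pmf (f x) y * pmf p x))"
    by (intro sum.cong refl arg_cong2[where f="(*)"])
       (simp add: pmf_bind integral_measure_pmf_real[OF fin_p])
  also have "\<dots> = (\<Sum>x\<in>set_pmf p. (\<Sum>y\<in>S. g y * pmf (f x) y) * pmf p x)"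
    by (simp add: sum_distrib_left sum_distrib_right sum.swap[of _ S] mult.assoc mult.left_commute)
  also have "\<dots> = (\<Sum>x\<in>set_pmf p. E (f x) g * pmf p x)"
    by (intro sum.cong refl arg_cong2[where f="(*)"] integral_measure_pmf_real[OF fin_S, symmetric])
       (use sub in auto)
  also have "\<dots> = E p (\<lambda>x. E (f x) g)"
    by (rule integral_measure_pmf_real[OF fin_p, symmetric]) auto
  finally show ?thesis .
qed

lemma expectation_swap_finite:
  fixes f :: "'a \<Rightarrow> 'b \<Rightarrow> real"
  assumes fin_p: "finite (set_pmf p)" and fin_q: "finite (set_pmf q)"
  shows "E p (\<lambda>a. E q (\<lambda>b. f a b)) = E q (\<lambda>b. E p (\<lambda>a. f a b))"
proof -
  have "E p (\<lambda>a. E q (\<lambda>b. f a b)) = (\<Sum>a\<in>set_pmf p. (\<Sum>b\<in>set_pmf q. f a b * pmf q b) * pmf p a)"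
    by (subst integral_measure_pmf_real[OF fin_p])
       (auto intro!: sum.cong integral_measure_pmf_real[OF fin_q])
  also have "\<dots> = (\<Sum>a\<in>set_pmf p. \<Sum>b\<in>set_pmf q. f a b * pmf q b * pmf p a)"
    by (simp add: sum_distrib_right)
  also have "\<dots> = (\<Sum>b\<in>set_pmf q. \<Sum>a\<in>set_pmf p. f a b * pmf q b * pmf p a)"
    by (rule sum.swap)
  also have "\<dots> = (\<Sum>b\<in>set_pmf q. (\<Sum>a\<in>set_pmf p. f a b * pmf p a) * pmf q b)"
    by (simp add: sum_distrib_left sum_distrib_right mult_ac)
  also have "\<dots> = E q (\<lambda>b. E p (\<lambda>a. f a b))"
    by (subst integral_measure_pmf_real[OF fin_q])
       (auto intro!: sum.cong integral_measure_pmf_real[OF fin_p, symmetric])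
  finally show ?thesis .
qed

lemma finite_set_pmf_iid_sum: "finite (set_pmf p) \<Longrightarrow> finite (set_pmf (iid_sum p k))"
  by (induction k) auto

lemma expectation_iid_sum_Suc:
  assumes "finite (set_pmf p)"
  shows "E (iid_sum p (Suc k)) g = E p (\<lambda>a. E (iid_sum p k) (\<lambda>b. g (a + b)))"
  by (simp add: expectation_bind_pmf_finite finite_set_pmf_iid_sum assms del: integral_map_pmf) simp

lemma iid_sum_central_moments:
  fixes p :: "nat pmf"
  assumes fin: "finite (set_pmf p)"
  defines "\<mu> \<equiv> E p real"
  shows "E (iid_sum p k) (\<lambda>s. real s - real k * \<mu>) = 0
       \<and> E (iid_sum p k) (\<lambda>s. (real s - real k * \<mu>) ^ 2) = real k * E p (\<lambda>a. (real a - \<mu>) ^ 2)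
       \<and> E (iid_sum p k) (\<lambda>s. (real s - real k * \<mu>) ^ 3) = real k * E p (\<lambda>a. (real a - \<mu>) ^ 3)"
proof (induction k)
  case 0
  show ?case by simp
next
  case (Suc k)
  define T where "T = (\<lambda>s. real s - real k * \<mu>)"
  have IH: "E (iid_sum p k) T = 0"
    "E (iid_sum p k) (\<lambda>s. T s ^ 2) = real k * E p (\<lambda>a. (real a - \<mu>) ^ 2)"
    "E (iid_sum p k) (\<lambda>s. T s ^ 3) = real k * E p (\<lambda>a. (real a - \<mu>) ^ 3)"
    using Suc by (simp_all add: T_def)
  have mean: "E p real = \<mu>"
    by (simp add: \<mu>_def)
  then have centred: "E p (\<lambda>a. real a - \<mu>) = 0"
    using fin by (simp add: integrable_measure_pmf_finite)
  have split: "E (iid_sum p (Suc k)) (\<lambda>s. (real s - real (Suc k) * \<mu>) ^ j)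
      = E p (\<lambda>a. E (iid_sum p k) (\<lambda>s. (real a - \<mu> + T s) ^ j))" for j
    unfolding expectation_iid_sum_Suc[OF fin] by (simp add: T_def algebra_simps)
  note shift = expectation_shift_powers[OF finite_set_pmf_iid_sum[OF fin], where f = T]
  note integrable = integrable_measure_pmf_finite[OF fin]
  have "E (iid_sum p (Suc k)) (\<lambda>s. (real s - real (Suc k) * \<mu>) ^ 1) = 0"
    unfolding split by (simp only: power_one_right shift IH) (simp add: centred)
  moreover have "E (iid_sum p (Suc k)) (\<lambda>s. (real s - real (Suc k) * \<mu>) ^ 2)
      = real (Suc k) * E p (\<lambda>a. (real a - \<mu>) ^ 2)"
    unfolding split shift IH by (simp add: integrable mean algebra_simps)
  moreover have "E (iid_sum p (Suc k)) (\<lambda>s. (real s - real (Suc k) * \<mu>) ^ 3)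
      = real (Suc k) * E p (\<lambda>a. (real a - \<mu>) ^ 3)"
    unfolding split shift IH by (simp add: integrable mean algebra_simps)
  ultimately show ?case by simp
qed

lemma sum_squares_lessThan_ge: "real n ^ 3 / 3 \<le> (\<Sum>i<n. (real i + 1) ^ 2)"
proof (induction n)
  case (Suc n)
  have "real (Suc n) ^ 3 / 3 \<le> real n ^ 3 / 3 + (real n + 1) ^ 2"
    by (simp add: power2_eq_square power3_eq_cube field_simps)
  with Suc show ?case by simp
qed simp

lemma sum_squares_countdown_ge: "real N ^ 3 / 3 \<le> (\<Sum>j<N. (real N - real j) ^ 2)"
proof -
  have "(\<Sum>j<N. (real N - real j) ^ 2) = (\<Sum>i<N. (real N - real (N - Suc i)) ^ 2)"
    by (rule sum.nat_diff_reindex[symmetric])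
  also have "\<dots> = (\<Sum>i<N. (real i + 1) ^ 2)"
    by (intro sum.cong refl) (simp add: of_nat_diff)
  finally show ?thesis
    using sum_squares_lessThan_ge[of N] by simp
qed

lemma square_le_tail_split:
  fixes y t u :: real
  assumes "0 \<le> y" "0 \<le> t" "0 < u"
  shows "y ^ 2 \<le> t * y + u ^ 2 * of_bool (t < y) + y ^ 3 / u"
proof -
  have nonneg: "0 \<le> t * y" "0 \<le> u ^ 2" "0 \<le> y ^ 3 / u"
    using assms by auto
  consider "y \<le> t" | "t < y" "y \<le> u" | "t < y" "u < y"
    by linarith
  then show ?thesis
  proof cases
    case 1
    then have "y ^ 2 \<le> t * y"
      using assms by (simp add: power2_eq_square mult_right_mono)
    then have "y ^ 2 \<le> t * y + y ^ 3 / u"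
      using nonneg by linarith
    with 1 show ?thesis by simp
  next
    case 2
    then have "y ^ 2 \<le> u ^ 2"
      using assms by (intro power_mono) auto
    then have "y ^ 2 \<le> t * y + u ^ 2 + y ^ 3 / u"
      using nonneg by linarith
    with 2 show ?thesis by simp
  next
    case 3
    then have "y ^ 2 \<le> y ^ 3 / u"
      using assms by (simp add: field_simps power2_eq_square power3_eq_cube mult_left_mono)
    then have "y ^ 2 \<le> t * y + u ^ 2 + y ^ 3 / u"
      using nonneg by linarith
    with 3 show ?thesis by simp
  qed
qed

lemma second_moment_le_tail_split:
  fixes Y :: "'a \<Rightarrow> real"
  assumes "finite (set_pmf Q)" "\<And>\<omega>. 0 \<le> Y \<omega>" "0 \<le> t" "0 < u"
  shows "E Q (\<lambda>\<omega>. Y \<omega> ^ 2)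
           \<le> t * E Q Y + u ^ 2 * measure_pmf.prob Q {\<omega>. t < Y \<omega>} + E Q (\<lambda>\<omega>. Y \<omega> ^ 3) / u"
proof -
  note integrable = integrable_measure_pmf_finite[OF assms(1)]
  have "E Q (\<lambda>\<omega>. Y \<omega> ^ 2)
      \<le> E Q (\<lambda>\<omega>. t * Y \<omega> + u ^ 2 * indicator {\<omega>. t < Y \<omega>} \<omega> + Y \<omega> ^ 3 / u)"
    using square_le_tail_split[OF assms(2) assms(3,4)]
    by (intro integral_mono integrable) (simp add: indicator_def)
  also have "\<dots> = t * E Q Y + u ^ 2 * measure_pmf.prob Q {\<omega>. t < Y \<omega>} + E Q (\<lambda>\<omega>. Y \<omega> ^ 3) / u"
    by (simp add: integrable)
  finally show ?thesis .
qed

lemma quadratic_tail_from_moments: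
  fixes Q :: "nat pmf" and N a b C :: real
  assumes fin: "finite (set_pmf Q)" and N: "0 < N" and a: "0 < a" and b: "0 < b" and C: "0 < C"
    and first: "E Q real \<le> a * N"
    and second: "b * N ^ 3 \<le> E Q (\<lambda>y. real y ^ 2)"
    and third: "E Q (\<lambda>y. real y ^ 3) \<le> C * N ^ 5"
  shows "b ^ 3 / (32 * C ^ 2) / N \<le> measure_pmf.prob Q {y. real y > b / (4 * a) * N ^ 2}"
proof -
  define t where "t = b / (4 * a) * N ^ 2"
  define u where "u = 4 * C / b * N ^ 2"
  define P where "P = measure_pmf.prob Q {y. t < real y}"
  have t: "0 \<le> t" and u: "0 < u"
    using N a b C by (auto simp: t_def u_def)
  have "b * N ^ 3 \<le> t * E Q real + u ^ 2 * P + E Q (\<lambda>y. real y ^ 3) / u"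
    using second second_moment_le_tail_split[OF fin _ t u, of real] by (simp add: P_def)
  moreover have "t * E Q real \<le> b * N ^ 3 / 4"
  proof -
    have "t * E Q real \<le> t * (a * N)"
      using first t by (intro mult_left_mono)
    also have "\<dots> = b * N ^ 3 / 4"
      using a by (simp add: t_def field_simps eval_nat_numeral)
    finally show ?thesis .
  qed
  moreover have "E Q (\<lambda>y. real y ^ 3) / u \<le> b * N ^ 3 / 4"
  proof -
    have "E Q (\<lambda>y. real y ^ 3) / u \<le> C * N ^ 5 / u"
      using third u by (intro divide_right_mono) auto
    also have "\<dots> = b * N ^ 3 / 4"
      using N b C by (simp add: u_def field_simps eval_nat_numeral)
    finally show ?thesis .
  qed
  ultimately have "b * N ^ 3 / 2 \<le> u ^ 2 * P"
    by linarith
  then have "b * N ^ 3 / 2 / u ^ 2 \<le> P"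
    using u by (simp add: pos_divide_le_eq mult.commute)
  moreover have "b * N ^ 3 / 2 / u ^ 2 = b ^ 3 / (32 * C ^ 2) / N"
    using N b C by (simp add: u_def field_simps eval_nat_numeral)
  ultimately show ?thesis
    by (simp add: P_def t_def)
qed

(* For k <= N this is E[Y_N | X_k, Y_k]: each of the X_k individuals of generation k has one
   expected descendant in each of the N - k later generations. *)
definition progeny_forecast :: "nat \<Rightarrow> nat \<Rightarrow> nat \<times> nat \<Rightarrow> real" where
  "progeny_forecast N k z = real (snd z) + (real N - real k) * real (fst z)"

lemma progeny_forecast_horizon [simp]: "progeny_forecast N N = (\<lambda>z. real (snd z))"
  by (simp add: progeny_forecast_def fun_eq_iff)

locale critical_offspring =
  fixes xi :: "nat pmf"
  assumes finite_offspring: "finite (set_pmf xi)"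
    and offspring_mean: "E xi real = 1"
begin

definition offspring_variance :: real where
  "offspring_variance = E xi (\<lambda>a. (real a - 1) ^ 2)"

definition offspring_central3 :: real where
  "offspring_central3 = E xi (\<lambda>a. (real a - 1) ^ 3)"

lemma offspring_variance_nonneg: "0 \<le> offspring_variance"
  by (simp add: offspring_variance_def)

lemma iid_sum_offspring_central_moments:
  "E (iid_sum xi x) (\<lambda>s. real s - real x) = 0"
  "E (iid_sum xi x) (\<lambda>s. (real s - real x) ^ 2) = real x * offspring_variance"
  "E (iid_sum xi x) (\<lambda>s. (real s - real x) ^ 3) = real x * offspring_central3"
  using iid_sum_central_moments[OF finite_offspring, of x]
  by (simp_all add: offspring_mean offspring_variance_def offspring_central3_def)

lemma expectation_iid_sum_offspring: "E (iid_sum xi x) real = real x"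
  using iid_sum_offspring_central_moments(1)
  by (simp add: integrable_measure_pmf_finite[OF finite_set_pmf_iid_sum[OF finite_offspring]])

lemma conditional_forecast_moments:
  fixes m c :: real and x :: nat
  defines "M \<equiv> \<lambda>s. m + c * (real s - real x)"
  shows "E (iid_sum xi x) M = m"
    and "E (iid_sum xi x) (\<lambda>s. M s * real s) = m * real x + c * offspring_variance * real x"
    and "E (iid_sum xi x) (\<lambda>s. M s ^ 2) = m ^ 2 + c ^ 2 * offspring_variance * real x"
    and "E (iid_sum xi x) (\<lambda>s. M s ^ 3)
           = m ^ 3 + 3 * m * c ^ 2 * offspring_variance * real x
             + c ^ 3 * offspring_central3 * real x"
proof -
  note fin = finite_set_pmf_iid_sum[OF finite_offspring, of x]
  note central = iid_sum_offspring_central_moments[of x]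
  note shift = expectation_shift_powers[OF fin, where d = m and f = "\<lambda>s. c * (real s - real x)"]
  show "E (iid_sum xi x) M = m"
    unfolding M_def shift by (simp add: central)
  show "E (iid_sum xi x) (\<lambda>s. M s ^ 2) = m ^ 2 + c ^ 2 * offspring_variance * real x"
    unfolding M_def shift by (simp add: central power_mult_distrib)
  show "E (iid_sum xi x) (\<lambda>s. M s ^ 3)
           = m ^ 3 + 3 * m * c ^ 2 * offspring_variance * real x
             + c ^ 3 * offspring_central3 * real x"
    unfolding M_def shift by (simp add: central power_mult_distrib)
  have "(\<lambda>s. M s * real s)
      = (\<lambda>s. m * real x + (m + c * real x) * (real s - real x) + c * (real s - real x) ^ 2)"
    by (auto simp: M_def power2_eq_square algebra_simps)
  then show "E (iid_sum xi x) (\<lambda>s. M s * real s) = m * real x + c * offspring_variance * real x"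
    by (simp add: integrable_measure_pmf_finite[OF fin] central)
qed

lemma finite_set_pmf_gw_XY: "finite (set_pmf (gw_XY xi n))"
  by (induction n) (auto simp: finite_set_pmf_iid_sum[OF finite_offspring] split: prod.splits)

lemma expectation_gw_XY_Suc:
  "E (gw_XY xi (Suc n)) h = E (gw_XY xi n) (\<lambda>z. E (iid_sum xi (fst z)) (\<lambda>s. h (s, snd z + s)))"
  unfolding gw_XY.simps
  by (subst expectation_bind_pmf_finite[OF finite_set_pmf_gw_XY])
     (auto simp: finite_set_pmf_iid_sum[OF finite_offspring] split_beta)

lemma expectation_forecast_Suc:
  "E (gw_XY xi (Suc k)) (\<lambda>z. g (progeny_forecast N (Suc k) z) (real (fst z)))
   = E (gw_XY xi k) (\<lambda>z. E (iid_sum xi (fst z))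
       (\<lambda>s. g (progeny_forecast N k z + (real N - real k) * (real s - real (fst z))) (real s)))"
  unfolding expectation_gw_XY_Suc by (simp add: progeny_forecast_def algebra_simps)

lemmas integrable_gw_XY = integrable_measure_pmf_finite[OF finite_set_pmf_gw_XY]

lemma expectation_gw_size: "E (gw_XY xi k) (\<lambda>z. real (fst z)) = 1"
proof (induction k)
  case (Suc k)
  then show ?case
    unfolding expectation_gw_XY_Suc by (simp add: expectation_iid_sum_offspring)
qed simp

lemma expectation_forecast: "E (gw_XY xi k) (progeny_forecast N k) = real N + 1"
proof (induction k)
  case (Suc k)
  then show ?case
    using expectation_forecast_Suc[where g = "\<lambda>m b. m"] by (simp add: conditional_forecast_moments)
qed (simp add: progeny_forecast_def)

lemma expectation_forecast_times_size:
  "E (gw_XY xi k) (\<lambda>z. progeny_forecast N k z * real (fst z))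
     = real N + 1 + offspring_variance * (\<Sum>j<k. real N - real j)"
proof (induction k)
  case (Suc k)
  have "E (gw_XY xi (Suc k)) (\<lambda>z. progeny_forecast N (Suc k) z * real (fst z))
      = E (gw_XY xi k) (\<lambda>z. progeny_forecast N k z * real (fst z)
                              + (real N - real k) * offspring_variance * real (fst z))"
    using expectation_forecast_Suc[where g = "\<lambda>m b. m * b"]
    by (simp add: conditional_forecast_moments)
  also have "\<dots> = E (gw_XY xi k) (\<lambda>z. progeny_forecast N k z * real (fst z))
                   + (real N - real k) * offspring_variance"
    by (simp add: integrable_gw_XY expectation_gw_size)
  finally show ?case
    using Suc by (simp add: algebra_simps)
qed (simp add: progeny_forecast_def)

lemma expectation_forecast_square:
  "E (gw_XY xi k) (\<lambda>z. progeny_forecast N k z ^ 2)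
     = (real N + 1) ^ 2 + offspring_variance * (\<Sum>j<k. (real N - real j) ^ 2)"
proof (induction k)
  case (Suc k)
  have "E (gw_XY xi (Suc k)) (\<lambda>z. progeny_forecast N (Suc k) z ^ 2)
      = E (gw_XY xi k) (\<lambda>z. progeny_forecast N k z ^ 2
                              + (real N - real k) ^ 2 * offspring_variance * real (fst z))"
    using expectation_forecast_Suc[where g = "\<lambda>m b. m ^ 2"]
    by (simp add: conditional_forecast_moments)
  also have "\<dots> = E (gw_XY xi k) (\<lambda>z. progeny_forecast N k z ^ 2)
                   + (real N - real k) ^ 2 * offspring_variance"
    by (simp add: integrable_gw_XY expectation_gw_size)
  finally show ?case
    using Suc by (simp add: algebra_simps)
qed (simp add: progeny_forecast_def)

lemma expectation_forecast_cube_Suc: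
  "E (gw_XY xi (Suc k)) (\<lambda>z. progeny_forecast N (Suc k) z ^ 3)
     = E (gw_XY xi k) (\<lambda>z. progeny_forecast N k z ^ 3)
       + 3 * (real N - real k) ^ 2 * offspring_variance
           * E (gw_XY xi k) (\<lambda>z. progeny_forecast N k z * real (fst z))
       + (real N - real k) ^ 3 * offspring_central3" (is "_ = ?rhs")
proof -
  have "E (gw_XY xi (Suc k)) (\<lambda>z. progeny_forecast N (Suc k) z ^ 3)
      = E (gw_XY xi k) (\<lambda>z. progeny_forecast N k z ^ 3
          + 3 * progeny_forecast N k z * (real N - real k) ^ 2 * offspring_variance * real (fst z)
          + (real N - real k) ^ 3 * offspring_central3 * real (fst z))"
    using expectation_forecast_Suc[where g = "\<lambda>m b. m ^ 3"]
    by (simp add: conditional_forecast_moments)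
  also have "\<dots> = E (gw_XY xi k) (\<lambda>z. progeny_forecast N k z ^ 3
          + (3 * (real N - real k) ^ 2 * offspring_variance)
              * (progeny_forecast N k z * real (fst z))
          + (real N - real k) ^ 3 * offspring_central3 * real (fst z))"
    by (simp add: algebra_simps)
  also have "\<dots> = ?rhs"
    by (simp add: integrable_gw_XY expectation_gw_size)
  finally show ?thesis .
qed

lemma expectation_gw_total_pow:
  "E (gw_total xi N) (\<lambda>y. real y ^ j) = E (gw_XY xi N) (\<lambda>z. progeny_forecast N N z ^ j)"
  by (simp add: gw_total_def)

lemma gw_total_mean: "E (gw_total xi N) real = real N + 1"
  using expectation_forecast[of N N] by (simp add: gw_total_def)

lemma gw_total_second_moment_ge:
  "offspring_variance * real N ^ 3 / 3 \<le> E (gw_total xi N) (\<lambda>y. real y ^ 2)"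
proof -
  have "offspring_variance * (real N ^ 3 / 3) \<le> offspring_variance * (\<Sum>j<N. (real N - real j) ^ 2)"
    by (intro mult_left_mono sum_squares_countdown_ge offspring_variance_nonneg)
  moreover have "0 \<le> (real N + 1) ^ 2"
    by simp
  ultimately show ?thesis
    unfolding expectation_gw_total_pow expectation_forecast_square by linarith
qed

lemma expectation_forecast_times_size_le:
  assumes "k \<le> N"
  shows "E (gw_XY xi k) (\<lambda>z. progeny_forecast N k z * real (fst z))
           \<le> (1 + offspring_variance) * (real N + 1) ^ 2"
proof -
  have "(\<Sum>j<k. real N - real j) \<le> real k * real N"
    using sum_bounded_above[of "{..<k}" "\<lambda>j. real N - real j" "real N"] by simp
  also have "\<dots> \<le> (real N + 1) ^ 2"
    using assms by (simp add: power2_eq_square mult_mono)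
  finally have "offspring_variance * (\<Sum>j<k. real N - real j)
      \<le> offspring_variance * (real N + 1) ^ 2"
    by (intro mult_left_mono offspring_variance_nonneg)
  moreover have "real N + 1 \<le> (real N + 1) ^ 2"
    by (simp add: power2_eq_square)
  ultimately show ?thesis
    unfolding expectation_forecast_times_size by (simp add: algebra_simps)
qed

lemma forecast_cube_increment_le:
  assumes "k < N"
  shows "3 * (real N - real k) ^ 2 * offspring_variance
           * E (gw_XY xi k) (\<lambda>z. progeny_forecast N k z * real (fst z))
         + (real N - real k) ^ 3 * offspring_central3
         \<le> (3 * offspring_variance * (1 + offspring_variance) + \<bar>offspring_central3\<bar>)
             * (real N + 1) ^ 4"
proof -
  define v where "v = offspring_variance"
  define \<kappa> where "\<kappa> = offspring_central3"
  define m where "m = E (gw_XY xi k) (\<lambda>z. progeny_forecast N k z * real (fst z))"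
  have v: "0 \<le> v"
    by (simp add: v_def offspring_variance_nonneg)
  have gap: "0 \<le> real N - real k" "real N - real k \<le> real N + 1"
    using assms by auto
  have m: "0 \<le> m" "m \<le> (1 + v) * (real N + 1) ^ 2"
    using assms expectation_forecast_times_size_le[of k N]
    by (auto simp: m_def v_def progeny_forecast_def intro!: Bochner_Integration.integral_nonneg)
  have "(real N - real k) ^ 2 * m \<le> (real N + 1) ^ 2 * ((1 + v) * (real N + 1) ^ 2)"
    using gap m by (intro mult_mono power_mono) auto
  also have "\<dots> = (1 + v) * (real N + 1) ^ 4"
    by (simp add: mult_ac flip: power_add)
  finally have "3 * v * ((real N - real k) ^ 2 * m) \<le> 3 * v * ((1 + v) * (real N + 1) ^ 4)"
    using v by (intro mult_left_mono) auto
  then have quadratic: "3 * (real N - real k) ^ 2 * v * m \<le> 3 * v * (1 + v) * (real N + 1) ^ 4"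
    by (simp only: mult_ac)
  have "(real N - real k) ^ 3 * \<kappa> \<le> (real N - real k) ^ 3 * \<bar>\<kappa>\<bar>"
    using gap by (intro mult_left_mono) auto
  also have "\<dots> \<le> (real N + 1) ^ 3 * \<bar>\<kappa>\<bar>"
    using gap by (intro mult_right_mono power_mono) auto
  also have "\<dots> \<le> (real N + 1) ^ 4 * \<bar>\<kappa>\<bar>"
    by (intro mult_right_mono power_increasing) auto
  finally have cubic: "(real N - real k) ^ 3 * \<kappa> \<le> \<bar>\<kappa>\<bar> * (real N + 1) ^ 4"
    by (simp add: mult.commute)
  have "(3 * v * (1 + v) + \<bar>\<kappa>\<bar>) * (real N + 1) ^ 4
      = 3 * v * (1 + v) * (real N + 1) ^ 4 + \<bar>\<kappa>\<bar> * (real N + 1) ^ 4"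
    by (simp add: algebra_simps)
  with quadratic cubic show ?thesis
    unfolding m_def v_def \<kappa>_def by linarith
qed

lemma expectation_forecast_cube_le:
  assumes "k \<le> N"
  shows "E (gw_XY xi k) (\<lambda>z. progeny_forecast N k z ^ 3)
           \<le> (real N + 1) ^ 3
             + real k * (3 * offspring_variance * (1 + offspring_variance) + \<bar>offspring_central3\<bar>)
               * (real N + 1) ^ 4"
  using assms
proof (induction k)
  case (Suc k)
  then show ?case
    using forecast_cube_increment_le[of k N]
    unfolding expectation_forecast_cube_Suc by (simp add: algebra_simps)
qed (simp add: progeny_forecast_def)

lemma gw_total_third_moment_le:
  "E (gw_total xi N) (\<lambda>y. real y ^ 3)
     \<le> (1 + 3 * offspring_variance * (1 + offspring_variance) + \<bar>offspring_central3\<bar>)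
         * (real N + 1) ^ 5"
proof -
  define B where "B = 3 * offspring_variance * (1 + offspring_variance) + \<bar>offspring_central3\<bar>"
  have B: "0 \<le> B"
    by (simp add: B_def offspring_variance_nonneg)
  have "E (gw_total xi N) (\<lambda>y. real y ^ 3) \<le> (real N + 1) ^ 3 + real N * B * (real N + 1) ^ 4"
    using expectation_forecast_cube_le[of N N] by (simp add: expectation_gw_total_pow B_def)
  also have "\<dots> \<le> (real N + 1) ^ 5 + B * (real N + 1) ^ 5"
  proof (intro add_mono)
    show "(real N + 1) ^ 3 \<le> (real N + 1) ^ 5"
      by (intro power_increasing) auto
    have "real N * (real N + 1) ^ 4 \<le> (real N + 1) * (real N + 1) ^ 4"
      by (intro mult_right_mono) auto
    then have "real N * (real N + 1) ^ 4 \<le> (real N + 1) ^ 5"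
      by (simp add: eval_nat_numeral)
    then show "real N * B * (real N + 1) ^ 4 \<le> B * (real N + 1) ^ 5"
      using B by (simp add: mult_left_mono mult.assoc mult.left_commute)
  qed
  finally show ?thesis
    by (simp add: B_def algebra_simps)
qed

theorem gw_total_quadratic_tail:
  assumes "0 < offspring_variance"
  shows "\<exists>c p :: real. 0 < c \<and> 0 < p \<and>
           (\<forall>N \<ge> 1. p / real N \<le> measure_pmf.prob (gw_total xi N) {y. real y > c * real N ^ 2})"
proof -
  define b where "b = offspring_variance / 3"
  define A where "A = 1 + 3 * offspring_variance * (1 + offspring_variance) + \<bar>offspring_central3\<bar>"
  define C where "C = 32 * A"
  have b: "0 < b" and A: "0 < A" and C: "0 < C"
    using assms by (auto simp: b_def A_def C_def add_pos_nonneg)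
  have "b ^ 3 / (32 * C ^ 2) / real N
      \<le> measure_pmf.prob (gw_total xi N) {y. real y > b / (4 * 2) * real N ^ 2}"
    if N: "1 \<le> N" for N
  proof (rule quadratic_tail_from_moments[OF _ _ _ b C])
    show "finite (set_pmf (gw_total xi N))"
      by (simp add: gw_total_def finite_set_pmf_gw_XY)
    show "E (gw_total xi N) real \<le> 2 * real N"
      using N by (simp add: gw_total_mean)
    show "b * real N ^ 3 \<le> E (gw_total xi N) (\<lambda>y. real y ^ 2)"
      using gw_total_second_moment_ge[of N] by (simp add: b_def)
    have "E (gw_total xi N) (\<lambda>y. real y ^ 3) \<le> A * (real N + 1) ^ 5"
      using gw_total_third_moment_le[of N] by (simp add: A_def)
    also have "\<dots> \<le> A * (2 * real N) ^ 5"
      using N A by (intro mult_left_mono power_mono) auto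
    finally show "E (gw_total xi N) (\<lambda>y. real y ^ 3) \<le> C * real N ^ 5"
      by (simp add: C_def)
  qed (use N in auto)
  moreover have "0 < b / (4 * 2)" "0 < b ^ 3 / (32 * C ^ 2)"
    using b C by auto
  ultimately show ?thesis
    by blast
qed

end

definition bernoulli_nat_pmf :: "real \<Rightarrow> nat pmf" where
  "bernoulli_nat_pmf q = map_pmf of_bool (bernoulli_pmf q)"

lemma finite_set_pmf_bernoulli_nat: "finite (set_pmf (bernoulli_nat_pmf q))"
  unfolding bernoulli_nat_pmf_def by (rule finite_subset[of _ "{0, 1}"]) auto

lemma expectation_bernoulli_nat:
  "q \<in> {0..1} \<Longrightarrow> E (bernoulli_nat_pmf q) f = q * f 1 + (1 - q) * f 0"
  by (simp add: bernoulli_nat_pmf_def mult.commute)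

lemma binomial_pmf_eq_iid_sum:
  assumes "q \<in> {0..1}"
  shows "binomial_pmf k q = iid_sum (bernoulli_nat_pmf q) k"
proof (induction k)
  case 0
  show ?case using assms by (simp add: binomial_pmf_0)
next
  case (Suc k)
  have "binomial_pmf (Suc k) q
      = bernoulli_pmf q \<bind> (\<lambda>b. binomial_pmf k q \<bind> (\<lambda>k. return_pmf ((if b then 1 else 0) + k)))"
    by (rule binomial_pmf_Suc[OF assms])
  also have "\<dots>
      = bernoulli_pmf q \<bind> (\<lambda>b. map_pmf (\<lambda>k. of_bool b + k) (iid_sum (bernoulli_nat_pmf q) k))"
    using Suc by (simp add: map_pmf_def of_bool_def)
  also have "\<dots> = iid_sum (bernoulli_nat_pmf q) (Suc k)"
    by (simp add: bernoulli_nat_pmf_def bind_map_pmf)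
  finally show ?case .
qed

lemma binomial_offspring:
  assumes "1 \<le> n0"
  defines "xi \<equiv> binomial_pmf n0 (1 / real n0)"
  shows "critical_offspring xi"
    and "critical_offspring.offspring_variance xi = 1 - 1 / real n0"
proof -
  define q where "q = 1 / real n0"
  have q: "q \<in> {0..1}" and n0q: "real n0 * q = 1"
    using assms(1) by (auto simp: q_def)
  have xi: "xi = iid_sum (bernoulli_nat_pmf q) n0"
    unfolding xi_def q_def[symmetric] by (rule binomial_pmf_eq_iid_sum[OF q])
  have fin: "finite (set_pmf xi)"
    unfolding xi by (intro finite_set_pmf_iid_sum finite_set_pmf_bernoulli_nat)
  have mean: "E (bernoulli_nat_pmf q) real = q"
    using q by (simp add: expectation_bernoulli_nat)
  have "E xi (\<lambda>s. real s - real n0 * q) = 0"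
    "E xi (\<lambda>s. (real s - real n0 * q) ^ 2)
       = real n0 * E (bernoulli_nat_pmf q) (\<lambda>a. (real a - q) ^ 2)"
    using iid_sum_central_moments[OF finite_set_pmf_bernoulli_nat, of q n0]
    unfolding xi mean by auto
  then have centred: "E xi (\<lambda>s. real s - 1) = 0"
    and "E xi (\<lambda>s. (real s - 1) ^ 2) = real n0 * (q * (1 - q))"
    unfolding n0q using q
    by (simp_all add: expectation_bernoulli_nat power2_eq_square algebra_simps)
  then have variance: "E xi (\<lambda>s. (real s - 1) ^ 2) = 1 - q"
    using n0q by (simp add: algebra_simps)
  from centred have "E xi real = 1"
    by (simp add: integrable_measure_pmf_finite[OF fin])
  with fin show xi_critical: "critical_offspring xi"
    by unfold_locales
  show "critical_offspring.offspring_variance xi = 1 - 1 / real n0"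
    using variance by (simp add: critical_offspring.offspring_variance_def[OF xi_critical] q_def)
qed

lemma iid_sum_scaled_tail_mono:
  fixes Q B :: "nat pmf" and T :: real
  assumes fin_Q: "finite (set_pmf Q)" and fin_B: "finite (set_pmf B)"
    and tail: "\<And>s. measure_pmf.prob B {k. T * real k > s} \<le> measure_pmf.prob Q {y. real y > s}"
  shows "measure_pmf.prob (iid_sum B m) {k. T * real k > s}
           \<le> measure_pmf.prob (iid_sum Q m) {y. real y > s}"
proof (induction m arbitrary: s)
  case 0
  then show ?case by (simp add: indicator_def)
next
  case (Suc m)
  have fin_Qm: "finite (set_pmf (iid_sum Q m))" and fin_Bm: "finite (set_pmf (iid_sum B m))"
    using fin_Q fin_B by (simp_all add: finite_set_pmf_iid_sum)
  have prob: "measure_pmf.prob R A = E R (indicator A)" for R :: "nat pmf" and A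
    by simp
  have "measure_pmf.prob (iid_sum B (Suc m)) {k. T * real k > s}
      = E B (\<lambda>b. E (iid_sum B m) (\<lambda>k. indicator {b. T * real b > s - T * real k} b))"
    unfolding prob expectation_iid_sum_Suc[OF fin_B]
    by (intro Bochner_Integration.integral_cong refl) (auto simp: indicator_def algebra_simps)
  also have "\<dots> = E (iid_sum B m) (\<lambda>k. measure_pmf.prob B {b. T * real b > s - T * real k})"
    unfolding prob by (rule expectation_swap_finite[OF fin_B fin_Bm])
  also have "\<dots> \<le> E (iid_sum B m) (\<lambda>k. measure_pmf.prob Q {a. real a > s - T * real k})"
    by (intro integral_mono integrable_measure_pmf_finite[OF fin_Bm] tail)
  also have "\<dots> = E (iid_sum B m) (\<lambda>k. E Q (\<lambda>a. indicator {k. T * real k > s - real a} k))"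
    unfolding prob by (intro Bochner_Integration.integral_cong refl) (auto simp: indicator_def)
  also have "\<dots> = E Q (\<lambda>a. E (iid_sum B m) (\<lambda>k. indicator {k. T * real k > s - real a} k))"
    by (rule expectation_swap_finite[OF fin_Bm fin_Q])
  also have "\<dots> \<le> E Q (\<lambda>a. E (iid_sum Q m) (\<lambda>y. indicator {y. real y > s - real a} y))"
    unfolding prob[symmetric] by (intro integral_mono integrable_measure_pmf_finite[OF fin_Q] Suc)
  also have "\<dots> = measure_pmf.prob (iid_sum Q (Suc m)) {y. real y > s}"
    unfolding prob expectation_iid_sum_Suc[OF fin_Q]
    by (intro Bochner_Integration.integral_cong refl) (auto simp: indicator_def algebra_simps)
  finally show ?case .
qed

lemma bernoulli_scaled_tail_le:
  assumes T: "0 \<le> T" and r: "r \<in> {0..1}"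
    and tail: "r \<le> measure_pmf.prob Q {y. real y > T}"
  shows "measure_pmf.prob (bernoulli_nat_pmf r) {k. T * real k > s}
           \<le> measure_pmf.prob Q {y. real y > s}"
proof -
  have "measure_pmf.prob (bernoulli_nat_pmf r) {k. T * real k > s}
      = E (bernoulli_nat_pmf r) (indicator {k. T * real k > s})"
    by simp
  also have "\<dots> = r * indicator {k. T * real k > s} 1 + (1 - r) * indicator {k. T * real k > s} 0"
    by (rule expectation_bernoulli_nat[OF r])
  finally have bernoulli: "measure_pmf.prob (bernoulli_nat_pmf r) {k. T * real k > s}
      = r * of_bool (T > s) + (1 - r) * of_bool (0 > s)"
    by (simp add: indicator_def)
  consider "s < 0" | "0 \<le> s" "s < T" | "T \<le> s"
    by linarith
  then show ?thesis
  proof cases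
    case 1
    then have "{y. real y > s} = (UNIV :: nat set)"
      by auto
    then show ?thesis
      by simp
  next
    case 2
    then have "measure_pmf.prob Q {y. real y > T} \<le> measure_pmf.prob Q {y. real y > s}"
      by (intro measure_pmf.finite_measure_mono) auto
    with 2 tail show ?thesis
      unfolding bernoulli by simp
  next
    case 3
    with T show ?thesis
      unfolding bernoulli by simp
  qed
qed

lemma binomial_scaled_tail_le_iid_sum:
  assumes "finite (set_pmf Q)" "0 \<le> T" "r \<in> {0..1}"
    and "r \<le> measure_pmf.prob Q {y. real y > T}"
  shows "measure_pmf.prob (binomial_pmf m r) {k. T * real k > s}
           \<le> measure_pmf.prob (iid_sum Q m) {y. real y > s}"
  unfolding binomial_pmf_eq_iid_sum[OF assms(3)]
  by (intro iid_sum_scaled_tail_mono assms(1) finite_set_pmf_bernoulli_nat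
      bernoulli_scaled_tail_le assms(2-4))

theorem lemma2p3:
  fixes n0 :: nat
  assumes "n0 \<ge> 2"
  defines "xi \<equiv> binomial_pmf n0 (1 / real n0)"
  shows "\<exists>c0 p0 :: real. c0 > 0 \<and> p0 > 0 \<and>
    (\<forall>n::nat. n \<ge> 1 \<longrightarrow>
       measure_pmf.prob (gw_total xi n) {y. real y > c0 * real n ^ 2} \<ge> p0 / real n) \<and>
    (\<forall>n::nat. n \<ge> 1 \<longrightarrow> (\<forall>s::real.
       measure_pmf.prob (iid_sum (gw_total xi n) n) {y. real y > s}
       \<ge> measure_pmf.prob (binomial_pmf n (p0 / real n)) {k. c0 * real n ^ 2 * real k > s}))"
proof -
  interpret critical_offspring xi
    unfolding xi_def using assms(1) by (intro binomial_offspring) auto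
  have "0 < offspring_variance"
    unfolding xi_def using assms(1) binomial_offspring(2)[of n0] by simp
  then obtain c p :: real where c: "0 < c" and p: "0 < p"
    and tail: "\<And>N. 1 \<le> N \<Longrightarrow>
      p / real N \<le> measure_pmf.prob (gw_total xi N) {y. real y > c * real N ^ 2}"
    using gw_total_quadratic_tail by blast
  have "p \<le> 1"
    using order_trans[OF tail[of 1] measure_pmf.prob_le_1] by simp
  have "measure_pmf.prob (binomial_pmf n (p / real n)) {k. c * real n ^ 2 * real k > s}
          \<le> measure_pmf.prob (iid_sum (gw_total xi n) n) {y. real y > s}" if "1 \<le> n" for n s
    using that p \<open>p \<le> 1\<close> c tail[OF that]
    by (intro binomial_scaled_tail_le_iid_sum)
       (auto simp: gw_total_def finite_set_pmf_gw_XY field_simps)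
  with c p tail show ?thesis
    by blast
qed

end
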